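(* Let $H$ be a connected unweighted graph on $p\ge2$ vertices, let $\ell\ge1$, and let $G$ be the weighted graph $$G=\tfrac{1}{p^{\ell-1}}H\otimes\tfrac{1}{p^{\ell-2}}H\otimes\cdots\otimes\tfrac1pH\otimes H$$ on $n=p^\ell$ vertices. Let $k\in\{1,\dots,\ell\}$ and $\rho=c\,p^{2k-\ell-1}$ for a constant $c>0$ (cuts within the $k$ coarsest scales). Then, as $n\to\infty$, $H_0:\beta\in\Theta_0$ and $H_1:\beta\in\Theta_1$ are asymptotically distinguished by the spectral scan statistic $\hat s$ provided $$\frac{\eta}{\sigma}=\omega\big(p^2(\ell+2)\,n^{(2k+1)/\ell}\big).$$
   Context: For a graph and scalar $a>0$, $aH$ is the graph with every edge weight multiplied by $a$. For weighted graphs $H_1,H_2$ on vertex sets $[p]$ with weight matrices $W^{(1)},W^{(2)}$, the product $H_1\otimes H_2$ has vertex set $[p]\times[p]$ and edge $((i_1,i_2),(j_1,j_2))$ of weight $W^{(2)}_{i_2j_2}$ if $i_1=j_1$ and of weight $W^{(1)}_{i_1j_1}$ if $i_2=j_2$ (so its Laplacian is $L_1\otimes I_p+I_p\otimes L_2$); the $\ell$-fold product is formed iteratively. $L$ is the combinatorial Laplacian $D-W$ of $G$. We observe $y=\beta+\varepsilon$, $\varepsilon\sim N(0,\sigma^2I_n)$, $\sigma>0$ known; $P_\beta$ is the law of $y$. $\mathbf 1$ is the all-ones vector, $\mathbf 1_C$ the indicator of $C$, $\bar C=V\setminus C$, $|\partial C|=\sum_{v\in C,w\in\bar C}W_{vw}$.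 $\mathcal{C}(\rho)=\{C\subset V:C\ne\emptyset,C\ne V,|\partial C|/(|C||\bar C|)\le\rho/n\}$. $\bar\beta=\frac1n\mathbf 1^\top\beta$; $\Theta_0=\{\mu\mathbf 1:\mu\in\mathbb{R}\}$, and for $\eta>0$, $\Theta_1=\{\mu\mathbf 1+\delta\mathbf 1_C:\mu\in\mathbb{R},\delta\ne0,C\in\mathcal{C}(\rho),\|\beta-\bar\beta\mathbf 1\|\ge\eta\}$. $\tilde y=y-\bar y\mathbf 1$. Spectral scan statistic: $\hat s=\sup\{(x^\top\tilde y)^2:x\in\mathbb{R}^n,x^\top Lx\le\rho,\|x\|\le1,x^\top\mathbf 1=0\}$. $p,\ell,k,\sigma,\eta$ may depend on $n$; $a_n=\omega(b_n)$ means $b_n/a_n\to0$. Asymptotically distinguished by $\hat s$: there exist thresholds $\tau_n$ such that $T=\mathbf 1\{\hat s>\tau_n\}$ satisfies $\sup_{\beta\in\Theta_0}P_\beta(T=1)\to0$ and $\sup_{\beta\in\Theta_1}P_\beta(T=0)\to0$. *)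

theory Defs
  imports "HOL-Probability.Probability"
begin

definition simple_graph_on :: "nat \<Rightarrow> (nat \<Rightarrow> nat \<Rightarrow> bool) \<Rightarrow> bool" where
  "simple_graph_on p E \<longleftrightarrow> (\<forall>i<p. \<forall>j<p. E i j \<longleftrightarrow> E j i) \<and> (\<forall>i<p. \<not> E i i)"

definition connected_on :: "nat \<Rightarrow> (nat \<Rightarrow> nat \<Rightarrow> bool) \<Rightarrow> bool" where
  "connected_on p E \<longleftrightarrow>
     (\<forall>i<p. \<forall>j<p. (i, j) \<in> {(a, b). a < p \<and> b < p \<and> E a b}\<^sup>*)"

definition unw :: "(nat \<Rightarrow> nat \<Rightarrow> bool) \<Rightarrow> nat \<Rightarrow> nat \<Rightarrow> real" where
  "unw E i j = (if E i j then 1 else 0)"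

definition gscale :: "real \<Rightarrow> (nat \<Rightarrow> nat \<Rightarrow> real) \<Rightarrow> nat \<Rightarrow> nat \<Rightarrow> real" where
  "gscale a W i j = a * W i j"

(* Product H1 (x) H2, where H1 lives on lists (tuples) and H2 on [p];
   the vertex (u, a) is encoded as the list u @ [a]. *)
definition gprod :: "(nat list \<Rightarrow> nat list \<Rightarrow> real) \<Rightarrow> (nat \<Rightarrow> nat \<Rightarrow> real)
                     \<Rightarrow> nat list \<Rightarrow> nat list \<Rightarrow> real" where
  "gprod W1 W2 u v =
     (if butlast u = butlast v then W2 (last u) (last v)
      else if last u = last v then W1 (butlast u) (butlast v) else 0)"

(* iterated product F1 (x) F2 (x) ... (x) Fl, formed iteratively from the left,
   starting from the one-vertex graph on the empty tuple *)
definition iprod :: "(nat \<Rightarrow> nat \<Rightarrow> real) list \<Rightarrow> nat list \<Rightarrow> nat list \<Rightarrow> real" where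
  "iprod Fs = foldl gprod (\<lambda>_ _. 0) Fs"

definition tuples :: "nat \<Rightarrow> nat \<Rightarrow> nat list set" where
  "tuples p l = {xs. length xs = l \<and> (\<forall>x\<in>set xs. x < p)}"

definition multiscale_graph :: "nat \<Rightarrow> nat \<Rightarrow> (nat \<Rightarrow> nat \<Rightarrow> bool) \<Rightarrow> nat list \<Rightarrow> nat list \<Rightarrow> real" where
  "multiscale_graph p l E =
     iprod (map (\<lambda>t. gscale (1 / real p ^ (l - t)) (unw E)) [1..<l+1])"

definition laplacian :: "'v set \<Rightarrow> ('v \<Rightarrow> 'v \<Rightarrow> real) \<Rightarrow> 'v \<Rightarrow> 'v \<Rightarrow> real" where
  "laplacian V W v w = (if v = w then (\<Sum>u\<in>V. W v u) else 0) - W v w"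

definition quad_form :: "'v set \<Rightarrow> ('v \<Rightarrow> 'v \<Rightarrow> real) \<Rightarrow> ('v \<Rightarrow> real) \<Rightarrow> real" where
  "quad_form V M x = (\<Sum>v\<in>V. \<Sum>w\<in>V. x v * M v w * x w)"

definition cut_weight :: "'v set \<Rightarrow> ('v \<Rightarrow> 'v \<Rightarrow> real) \<Rightarrow> 'v set \<Rightarrow> real" where
  "cut_weight V W C = (\<Sum>v\<in>C. \<Sum>w\<in>V - C. W v w)"

definition cut_class :: "'v set \<Rightarrow> ('v \<Rightarrow> 'v \<Rightarrow> real) \<Rightarrow> real \<Rightarrow> 'v set set" where
  "cut_class V W \<rho> = {C. C \<subseteq> V \<and> C \<noteq> {} \<and> C \<noteq> V \<and>
      cut_weight V W C / (real (card C) * real (card (V - C))) \<le> \<rho> / real (card V)}"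

definition mean :: "'v set \<Rightarrow> ('v \<Rightarrow> real) \<Rightarrow> real" where
  "mean V y = (\<Sum>v\<in>V. y v) / real (card V)"

definition vnorm :: "'v set \<Rightarrow> ('v \<Rightarrow> real) \<Rightarrow> real" where
  "vnorm V x = sqrt (\<Sum>v\<in>V. (x v)\<^sup>2)"

definition spectral_scan :: "'v set \<Rightarrow> ('v \<Rightarrow> 'v \<Rightarrow> real) \<Rightarrow> real \<Rightarrow> ('v \<Rightarrow> real) \<Rightarrow> real" where
  "spectral_scan V W \<rho> y =
     Sup {(\<Sum>v\<in>V. x v * (y v - mean V y))\<^sup>2 | x.
            quad_form V (laplacian V W) x \<le> \<rho> \<and> vnorm V x \<le> 1 \<and> (\<Sum>v\<in>V. x v) = 0}"

(* Theta_0 and Theta_1 (as sets of signals, only values on V matter) *)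
definition Theta0 :: "'v set \<Rightarrow> ('v \<Rightarrow> real) set" where
  "Theta0 V = {\<beta>. \<exists>\<mu>::real. \<forall>v\<in>V. \<beta> v = \<mu>}"

definition Theta1 :: "'v set \<Rightarrow> ('v \<Rightarrow> 'v \<Rightarrow> real) \<Rightarrow> real \<Rightarrow> real \<Rightarrow> ('v \<Rightarrow> real) set" where
  "Theta1 V W \<rho> \<eta> = {\<beta>. \<exists>\<mu> \<delta> C. \<delta> \<noteq> 0 \<and> C \<in> cut_class V W \<rho> \<and>
      (\<forall>v\<in>V. \<beta> v = \<mu> + \<delta> * (if v \<in> C then 1 else 0)) \<and>
      vnorm V (\<lambda>v. \<beta> v - mean V \<beta>) \<ge> \<eta>}"

definition noise :: "'v set \<Rightarrow> real \<Rightarrow> ('v \<Rightarrow> real) measure" where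
  "noise V \<sigma> = PiM V (\<lambda>_. density lborel (normal_density 0 \<sigma>))"

definition prob_obs :: "'v set \<Rightarrow> real \<Rightarrow> ('v \<Rightarrow> real) \<Rightarrow> (('v \<Rightarrow> real) \<Rightarrow> bool) \<Rightarrow> real" where
  "prob_obs V \<sigma> \<beta> A = measure (noise V \<sigma>) {\<epsilon> \<in> space (noise V \<sigma>). A (\<lambda>v. \<beta> v + \<epsilon> v)}"

end

theory Submission
  imports Defs
begin

(* Null hypothesis. For a feasible direction x (sum x = 0, x^T L x <= rho) the statistic
   reduces to (sum_v x_v e_v)^2, e the noise. Grouping vertices by their prefixes of length t,
   this inner product telescopes over the l levels of the prefix tree; each increment is bounded
   by Cauchy-Schwarz and a Poincare inequality on the connected factor H, which gives
   s <= 2 l p^5 rho A(e), where A(e) sums the squared block sums of e over all levels.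
   Since E A = l sigma^2 p^l, Markov's inequality bounds the type-I error.
   Alternative. For beta = mu 1 + delta 1_C with C in C(rho), the normalised centred signal is a
   feasible direction, so s >= (||beta - mean beta|| + Z)^2 with Z ~ N(0, sigma^2), and
   Chebyshev's inequality bounds the type-II error by 4 sigma^2 / eta^2.
   Both errors are O(r^2) for the rate r = p^2 (l+2) n^((2k+1)/l) sigma / eta, which tends to 0. *)


section \<open>Second moments of Gaussian noise\<close>

lemma normal_density_moments:
  fixes \<sigma> :: real assumes s: "\<sigma> > 0"
  shows "has_bochner_integral (density lborel (normal_density 0 \<sigma>)) (\<lambda>x. x) 0"
    "has_bochner_integral (density lborel (normal_density 0 \<sigma>)) (\<lambda>x. x^2) (\<sigma>^2)"
    "has_bochner_integral (density lborel (normal_density 0 \<sigma>)) (\<lambda>x. 1::real) 1"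
proof -
  have nn: "\<And>x. 0 \<le> normal_density 0 \<sigma> x" by (rule normal_density_nonneg)
  have "has_bochner_integral lborel (\<lambda>x. normal_density 0 \<sigma> x * (x - 0) ^ (2 * 0 + 1)) 0"
    using normal_moment_odd[OF s] by blast
  then have "has_bochner_integral lborel (\<lambda>x. normal_density 0 \<sigma> x *\<^sub>R x) 0" by simp
  then show "has_bochner_integral (density lborel (normal_density 0 \<sigma>)) (\<lambda>x. x) 0"
    by (subst has_bochner_integral_density) (auto simp: nn)
  have "has_bochner_integral lborel (\<lambda>x. normal_density 0 \<sigma> x * (x - 0) ^ (2 * 1))
       (fact (2 * 1) / ((2 / \<sigma>\<^sup>2)^1 * fact 1))"
    using normal_moment_even[OF s] by blast
  moreover have "(fact (2 * 1) / ((2 / \<sigma>\<^sup>2)^1 * fact 1)) = (\<sigma>^2::real)" using s by simp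
  ultimately have "has_bochner_integral lborel (\<lambda>x. normal_density 0 \<sigma> x *\<^sub>R x^2) (\<sigma>^2)" by simp
  then show "has_bochner_integral (density lborel (normal_density 0 \<sigma>)) (\<lambda>x. x^2) (\<sigma>^2)"
    by (subst has_bochner_integral_density) (auto simp: nn)
  have "has_bochner_integral lborel (\<lambda>x. normal_density 0 \<sigma> x * (x - 0) ^ (2 * 0))
       (fact (2 * 0) / ((2 / \<sigma>\<^sup>2)^0 * fact 0))"
    using normal_moment_even[OF s] by blast
  then have "has_bochner_integral lborel (\<lambda>x. normal_density 0 \<sigma> x *\<^sub>R (1::real)) 1" by simp
  then show "has_bochner_integral (density lborel (normal_density 0 \<sigma>)) (\<lambda>x. 1::real) 1"
    by (subst has_bochner_integral_density) (auto simp: nn)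
qed

lemma noise_prob_space: "\<sigma> > 0 \<Longrightarrow> prob_space (noise V \<sigma>)"
  unfolding noise_def by (intro prob_space_PiM prob_space_normal_density)

lemma noise_covariance:
  fixes \<sigma> :: real assumes s: "\<sigma> > 0" and fin: "finite V" and vw: "v \<in> V" "w \<in> V"
  shows "integrable (noise V \<sigma>) (\<lambda>e. e v * e w)"
    "(\<integral>e. e v * e w \<partial>noise V \<sigma>) = (if v = w then \<sigma>^2 else 0)"
proof -
  define N where "N = density lborel (normal_density 0 \<sigma>)"
  have pN: "prob_space N" unfolding N_def by (rule prob_space_normal_density[OF s])
  interpret product_prob_space "\<lambda>_. N" V
    unfolding product_prob_space_def product_prob_space_axioms_def product_sigma_finite_def
    using pN prob_space_imp_sigma_finite by blast
  note G = normal_density_moments[OF s, folded N_def]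
  define g where "g i t = (if i = v then t else 1) * (if i = w then t else (1::real))" for i t
  have gc: "g i = (if i = v \<and> i = w then (\<lambda>x. x^2) else if i = v \<or> i = w then (\<lambda>x. x) else (\<lambda>x. 1))" for i
    by (auto simp: g_def fun_eq_iff power2_eq_square)
  have gi: "integrable N (g i)" for i
    unfolding gc using G by (simp add: integrable.intros)
  have eq: "(\<lambda>e. e v * e w) = (\<lambda>e. \<Prod>i\<in>V. g i (e i))"
    by (rule ext) (simp add: g_def prod.distrib fin vw)
  show "integrable (noise V \<sigma>) (\<lambda>e. e v * e w)"
    unfolding noise_def N_def[symmetric] eq by (rule product_integrable_prod[OF fin gi])
  have ig: "integral\<^sup>L N (g i) = (if i = v then (if v = w then \<sigma>^2 else 0) else if i = w then 0 else 1)" for i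
    unfolding gc using G by (auto dest: has_bochner_integral_integral_eq)
  have "(\<integral>e. e v * e w \<partial>noise V \<sigma>) = (\<Prod>i\<in>V. integral\<^sup>L N (g i))"
    unfolding noise_def N_def[symmetric] eq by (rule product_integral_prod[OF fin gi])
  also have "\<dots> = (if v = w then \<sigma>^2 else 0)"
  proof (cases "v = w")
    case True
    then show ?thesis unfolding ig using fin vw
      by (simp add: prod.If_cases Int_absorb1 prod.neutral)
  next
    case False
    have "(\<Prod>i\<in>V. integral\<^sup>L N (g i)) = 0"
      by (rule prod_zero) (use fin vw False ig in auto)
    then show ?thesis using False by simp
  qed
  finally show "(\<integral>e. e v * e w \<partial>noise V \<sigma>) = (if v = w then \<sigma>^2 else 0)" .
qed

lemma noise_linear_second_moment:
  fixes \<sigma> :: real assumes s: "\<sigma> > 0" and fin: "finite V"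
  shows "integrable (noise V \<sigma>) (\<lambda>e. (\<Sum>v\<in>V. a v * e v)^2)"
    "(\<integral>e. (\<Sum>v\<in>V. a v * e v)^2 \<partial>noise V \<sigma>) = \<sigma>^2 * (\<Sum>v\<in>V. (a v)^2)"
proof -
  have eq: "(\<lambda>e. (\<Sum>v\<in>V. a v * e v)^2) = (\<lambda>e. \<Sum>v\<in>V. \<Sum>w\<in>V. (a v * a w) * (e v * e w))"
    by (rule ext) (simp add: power2_eq_square sum_product algebra_simps)
  have int: "integrable (noise V \<sigma>) (\<lambda>e. (a v * a w) * (e v * e w))" if "v \<in> V" "w \<in> V" for v w
    using noise_covariance(1)[OF s fin that] by simp
  show "integrable (noise V \<sigma>) (\<lambda>e. (\<Sum>v\<in>V. a v * e v)^2)"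
    unfolding eq using int by (intro Bochner_Integration.integrable_sum) blast
  have "(\<integral>e. (\<Sum>v\<in>V. a v * e v)^2 \<partial>noise V \<sigma>) =
      (\<Sum>v\<in>V. \<Sum>w\<in>V. (a v * a w) * (if v = w then \<sigma>^2 else 0))"
    unfolding eq using int noise_covariance(2)[OF s fin]
    by (simp add: Bochner_Integration.integral_sum Bochner_Integration.integrable_sum)
  also have "\<dots> = \<sigma>^2 * (\<Sum>v\<in>V. (a v)^2)"
    using fin by (simp add: sum_distrib_left power2_eq_square if_distrib mult.commute cong: if_cong)
  finally show "(\<integral>e. (\<Sum>v\<in>V. a v * e v)^2 \<partial>noise V \<sigma>) = \<sigma>^2 * (\<Sum>v\<in>V. (a v)^2)" .
qed

lemma prob_obs_Markov:
  assumes s: "\<sigma> > 0" and tau: "\<tau> > 0"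
    and int: "integrable (noise V \<sigma>) Z" and nonneg: "\<And>e. 0 \<le> Z e"
    and forces: "\<And>e. A (\<lambda>v. \<beta> v + e v) \<Longrightarrow> \<tau> \<le> Z e"
  shows "prob_obs V \<sigma> \<beta> A \<le> (\<integral>e. Z e \<partial>noise V \<sigma>) / \<tau>"
proof -
  define N where "N = noise V \<sigma>"
  interpret N: prob_space N unfolding N_def by (rule noise_prob_space[OF s])
  have [measurable]: "Z \<in> borel_measurable N"
    using int unfolding N_def by (rule borel_measurable_integrable)
  have level_set: "{e \<in> space N. \<tau> \<le> Z e} \<in> sets N" by measurable
  have "prob_obs V \<sigma> \<beta> A = measure N {e \<in> space N. A (\<lambda>v. \<beta> v + e v)}"
    unfolding prob_obs_def N_def ..
  also have "\<dots> \<le> measure N {e \<in> space N. \<tau> \<le> Z e}"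
    by (rule N.finite_measure_mono[OF _ level_set]) (use forces in auto)
  also have "\<dots> \<le> (\<integral>e. Z e \<partial>N) / \<tau>"
    by (rule integral_Markov_inequality_measure[OF int[folded N_def] _ _ tau, of "space N"])
       (auto simp: nonneg)
  finally show ?thesis unfolding N_def .
qed


section \<open>Sums over tuples\<close>

lemma tuples_0[simp]: "tuples p 0 = {[]}"
  by (auto simp: tuples_def)

lemma tuples_snoc: "tuples p (Suc n) = (\<lambda>(r,i). r @ [i]) ` (tuples p n \<times> {..<p})"
proof (intro set_eqI iffI)
  fix u assume "u \<in> tuples p (Suc n)"
  then have "u \<noteq> []" and "length u = Suc n" "\<forall>x\<in>set u. x < p" by (auto simp: tuples_def)
  then obtain r a where "u = r @ [a]" by (metis rev_exhaust)
  then show "u \<in> (\<lambda>(r,i). r @ [i]) ` (tuples p n \<times> {..<p})"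
    using \<open>length u = Suc n\<close> \<open>\<forall>x\<in>set u. x < p\<close> by (auto simp: tuples_def image_iff)
qed (auto simp: tuples_def)

lemma tuples_snocE:
  assumes "u \<in> tuples p (Suc n)"
  obtains r a where "u = r @ [a]" "r \<in> tuples p n" "a < p"
  using assms unfolding tuples_snoc by auto

lemma tuples_cons: "tuples p (Suc n) = (\<lambda>(i,w). i # w) ` ({..<p} \<times> tuples p n)"
proof (intro set_eqI iffI)
  fix u assume "u \<in> tuples p (Suc n)"
  then show "u \<in> (\<lambda>(i,w). i # w) ` ({..<p} \<times> tuples p n)"
    by (cases u) (auto simp: tuples_def image_iff)
qed (auto simp: tuples_def)

lemma tuples_append: "tuples p (a + b) = (\<lambda>(q,w). q @ w) ` (tuples p a \<times> tuples p b)"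
proof (intro set_eqI iffI)
  fix u assume u: "u \<in> tuples p (a + b)"
  have "u = take a u @ drop a u" by simp
  moreover have "take a u \<in> tuples p a" "drop a u \<in> tuples p b"
    using u by (auto simp: tuples_def dest: in_set_takeD in_set_dropD)
  ultimately show "u \<in> (\<lambda>(q,w). q @ w) ` (tuples p a \<times> tuples p b)"
    by (intro rev_image_eqI[of "(take a u, drop a u)"]) auto
qed (auto simp: tuples_def)

lemma finite_tuples[simp]: "finite (tuples p n)"
  by (induction n) (auto simp: tuples_snoc)

lemma sum_tuples_snoc:
  "(\<Sum>v\<in>tuples p (Suc n). f v) = (\<Sum>r\<in>tuples p n. \<Sum>i<p. f (r @ [i]))"
proof -
  have inj: "inj_on (\<lambda>(r,i). r @ [i]) (tuples p n \<times> {..<p})" by (auto simp: inj_on_def)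
  show ?thesis unfolding tuples_snoc sum.reindex[OF inj]
    by (simp add: sum.cartesian_product prod.case_distrib)
qed

lemma sum_tuples_cons:
  "(\<Sum>v\<in>tuples p (Suc n). f v) = (\<Sum>i<p. \<Sum>w\<in>tuples p n. f (i # w))"
proof -
  have inj: "inj_on (\<lambda>(i,w). i # w) ({..<p} \<times> tuples p n)" by (auto simp: inj_on_def)
  show ?thesis unfolding tuples_cons sum.reindex[OF inj]
    by (simp add: sum.cartesian_product prod.case_distrib)
qed

lemma sum_tuples_append:
  "(\<Sum>v\<in>tuples p (a + b). f v) = (\<Sum>q\<in>tuples p a. \<Sum>w\<in>tuples p b. f (q @ w))"
proof -
  have inj: "inj_on (\<lambda>(q,w). q @ w) (tuples p a \<times> tuples p b)" by (auto simp: inj_on_def tuples_def)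
  show ?thesis unfolding tuples_append sum.reindex[OF inj]
    by (simp add: sum.cartesian_product prod.case_distrib)
qed

lemma sum_tuples_at_coordinate:
  "(\<Sum>u\<in>tuples p (t + Suc m). F u) = (\<Sum>r\<in>tuples p t. \<Sum>a<p. \<Sum>w\<in>tuples p m. F (r @ [a] @ w))"
  unfolding sum_tuples_append sum_tuples_cons by simp

text \<open>Varying one coordinate of a vertex of \<open>[p]^(t+1+m)\<close> stays in the vertex set, so a sum of
  nonnegative terms along such a line is at most the sum over all vertices.\<close>

lemma sum_coordinate_le_sum_tuples:
  fixes g :: "nat list \<Rightarrow> real"
  assumes r: "r \<in> tuples p t" and w: "w \<in> tuples p m" and l: "l = t + Suc m"
    and nonneg: "\<And>v. 0 \<le> g v"
  shows "(\<Sum>b<p. g (r @ [b] @ w)) \<le> (\<Sum>v\<in>tuples p l. g v)"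
proof -
  have inj: "inj_on (\<lambda>b. r @ [b] @ w) {..<p}" by (auto simp: inj_on_def)
  have sub: "(\<lambda>b. r @ [b] @ w) ` {..<p} \<subseteq> tuples p l" using r w l by (auto simp: tuples_def)
  have "(\<Sum>b<p. g (r @ [b] @ w)) = (\<Sum>v\<in>(\<lambda>b. r @ [b] @ w) ` {..<p}. g v)"
    by (simp only: sum.reindex[OF inj] o_def)
  also have "\<dots> \<le> (\<Sum>v\<in>tuples p l. g v)"
    by (rule sum_mono2[OF finite_tuples sub]) (use nonneg in auto)
  finally show ?thesis .
qed

lemma card_tuples[simp]: "card (tuples p n) = p ^ n"
proof (induction n)
  case (Suc n)
  have "card (tuples p (Suc n)) = (\<Sum>v\<in>tuples p (Suc n). 1)" by simp
  also have "\<dots> = p ^ Suc n" unfolding sum_tuples_snoc using Suc by simp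
  finally show ?case .
qed simp


section \<open>A Poincare inequality on a connected graph\<close>

lemma relpow_increment_bound:
  fixes f :: "'a \<Rightarrow> real"
  assumes edge: "\<And>a b. (a, b) \<in> R \<Longrightarrow> \<bar>f a - f b\<bar> \<le> s" and path: "(a, b) \<in> R ^^ n"
  shows "\<bar>f a - f b\<bar> \<le> real n * s"
  using path
proof (induction n arbitrary: b)
  case (Suc n)
  then obtain c where ac: "(a, c) \<in> R ^^ n" and cb: "(c, b) \<in> R" by auto
  have "\<bar>f a - f b\<bar> \<le> \<bar>f a - f c\<bar> + \<bar>f c - f b\<bar>" by simp
  also have "\<dots> \<le> real n * s + s" using Suc.IH[OF ac] edge[OF cb] by simp
  finally show ?case by (simp add: algebra_simps)
qed simp

text \<open>On a connected unweighted graph with \<open>p\<close> vertices any two vertices are joined by a path of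
  at most \<open>p\<^sup>2\<close> edges, each contributing at most the square root of the Dirichlet energy of \<open>f\<close>.\<close>

lemma connected_difference_bound:
  fixes f :: "nat \<Rightarrow> real"
  assumes conn: "connected_on p E" and i: "i < p" and j: "j < p"
  shows "(f i - f j)^2 \<le> real p ^ 4 * (\<Sum>a<p. \<Sum>b<p. unw E a b * (f a - f b)^2)"
proof -
  define R where "R = {(a, b). a < p \<and> b < p \<and> E a b}"
  define D where "D = (\<Sum>a<p. \<Sum>b<p. unw E a b * (f a - f b)^2)"
  have D0: "0 \<le> D" unfolding D_def unw_def by (intro sum_nonneg) auto
  have edge: "\<bar>f a - f b\<bar> \<le> sqrt D" if "(a, b) \<in> R" for a b
  proof -
    have ab: "a < p" "b < p" "E a b" using that by (auto simp: R_def)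
    have "(f a - f b)^2 = unw E a b * (f a - f b)^2" using ab by (simp add: unw_def)
    also have "\<dots> \<le> (\<Sum>b<p. unw E a b * (f a - f b)^2)"
      by (rule member_le_sum[where f="\<lambda>b. unw E a b * (f a - f b)^2"]) (use ab in \<open>auto simp: unw_def\<close>)
    also have "\<dots> \<le> D" unfolding D_def
      by (rule member_le_sum[where f="\<lambda>a. \<Sum>b<p. unw E a b * (f a - f b)^2"])
         (use ab in \<open>auto simp: unw_def intro!: sum_nonneg\<close>)
    finally show ?thesis by (simp add: real_le_rsqrt)
  qed
  have finR: "finite R" unfolding R_def
    by (rule finite_subset[of _ "{..<p} \<times> {..<p}"]) auto
  have cardR: "card R \<le> p * p"
    using card_mono[of "{..<p} \<times> {..<p}" R] unfolding R_def by (auto simp: card_cartesian_product)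
  have "(i, j) \<in> R\<^sup>*" using conn i j unfolding connected_on_def R_def by blast
  then obtain n where n: "n \<le> card R" "(i, j) \<in> R ^^ n"
    using rtrancl_finite_eq_relpow[OF finR] by blast
  have "\<bar>f i - f j\<bar> \<le> real n * sqrt D" by (rule relpow_increment_bound[OF edge n(2)])
  also have "\<dots> \<le> real p ^ 2 * sqrt D"
  proof (rule mult_right_mono)
    have "real n \<le> real (p * p)" using n(1) cardR by linarith
    then show "real n \<le> real p ^ 2" by (simp add: power2_eq_square)
  qed (simp add: D0)
  finally have "\<bar>f i - f j\<bar>^2 \<le> (real p ^ 2 * sqrt D)^2" by (rule power_mono) simp
  then show ?thesis using D0 unfolding D_def by (simp add: power_mult_distrib)
qed

lemma connected_poincare:
  fixes f :: "nat \<Rightarrow> real"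
  assumes conn: "connected_on p E"
  shows "(\<Sum>i<p. \<Sum>j<p. (f i - f j)^2) \<le> real p ^ 6 * (\<Sum>a<p. \<Sum>b<p. unw E a b * (f a - f b)^2)"
proof -
  have "(\<Sum>i<p. \<Sum>j<p. (f i - f j)^2) \<le>
      (\<Sum>i<p. \<Sum>j<p. real p ^ 4 * (\<Sum>a<p. \<Sum>b<p. unw E a b * (f a - f b)^2))"
    by (intro sum_mono connected_difference_bound[OF conn]) auto
  also have "\<dots> = real p ^ 6 * (\<Sum>a<p. \<Sum>b<p. unw E a b * (f a - f b)^2)"
    by (simp add: eval_nat_numeral)
  finally show ?thesis .
qed


section \<open>The multiscale product graph\<close>

lemma iprod_snoc:
  "iprod (Fs @ [F]) (u @ [a]) (v @ [b]) = (if u = v then F a b else if a = b then iprod Fs u v else 0)"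
  unfolding iprod_def by (simp add: gprod_def)

lemma iprod_nonneg: "(\<And>F i j. F \<in> set Fs \<Longrightarrow> 0 \<le> F i j) \<Longrightarrow> 0 \<le> iprod Fs u v"
proof -
  have "0 \<le> foldl gprod W0 Fs u v"
    if "\<And>u v. 0 \<le> W0 u v" "\<And>F i j. F \<in> set Fs \<Longrightarrow> 0 \<le> F i j" for W0
    using that
  proof (induction Fs arbitrary: W0)
    case (Cons F Fs)
    show ?case unfolding foldl_Cons
      by (rule Cons.IH) (use Cons.prems in \<open>auto simp: gprod_def\<close>)
  qed simp
  then show "(\<And>F i j. F \<in> set Fs \<Longrightarrow> 0 \<le> F i j) \<Longrightarrow> 0 \<le> iprod Fs u v"
    unfolding iprod_def by auto
qed

lemma iprod_sym:
  "(\<And>F i j. F \<in> set Fs \<Longrightarrow> i < p \<Longrightarrow> j < p \<Longrightarrow> F i j = F j i) \<Longrightarrow>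
   u \<in> tuples p (length Fs) \<Longrightarrow> v \<in> tuples p (length Fs) \<Longrightarrow> iprod Fs u v = iprod Fs v u"
proof (induction Fs arbitrary: u v rule: rev_induct)
  case Nil then show ?case by (simp add: iprod_def)
next
  case (snoc F Fs)
  from snoc.prems(2) obtain r a where u: "u = r @ [a]" "r \<in> tuples p (length Fs)" "a < p"
    by (auto elim: tuples_snocE)
  from snoc.prems(3) obtain r' b where v: "v = r' @ [b]" "r' \<in> tuples p (length Fs)" "b < p"
    by (auto elim: tuples_snocE)
  have IH: "iprod Fs r r' = iprod Fs r' r" using snoc.IH[OF _ u(2) v(2)] snoc.prems(1) by auto
  have F: "F a b = F b a" using snoc.prems(1) u(3) v(3) by auto
  show ?case unfolding u v iprod_snoc using IH F by auto
qed

lemma iprod_coordinate: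
  "length r = s \<Longrightarrow> length Fs = s + 1 + length w \<Longrightarrow> i \<noteq> j \<Longrightarrow>
   iprod Fs (r @ [i] @ w) (r @ [j] @ w) = (Fs ! s) i j"
proof (induction w arbitrary: Fs rule: rev_induct)
  case Nil
  then obtain Fs' F where Fs: "Fs = Fs' @ [F]" "length Fs' = s"
    by (metis add.right_neutral length_Suc_conv_rev list.size(3) Suc_eq_plus1)
  show ?case using Nil unfolding Fs by (simp add: iprod_snoc nth_append)
next
  case (snoc a w)
  then obtain Fs' F where Fs: "Fs = Fs' @ [F]" "length Fs' = s + 1 + length w"
    by (metis add_Suc_right length_Suc_conv_rev length_append_singleton)
  have "iprod Fs (r @ [i] @ w @ [a]) (r @ [j] @ w @ [a]) = iprod Fs' (r @ [i] @ w) (r @ [j] @ w)"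
    using snoc.prems unfolding Fs using iprod_snoc[of Fs' F "r @ [i] @ w" a "r @ [j] @ w" a] by simp
  also have "\<dots> = (Fs' ! s) i j" by (rule snoc.IH) (use snoc.prems Fs in auto)
  finally show ?case unfolding Fs using Fs(2) by (simp add: nth_append)
qed

lemma multiscale_graph_coordinate:
  assumes "length r = s" "length w = l - 1 - s" "s < l" "i \<noteq> j"
  shows "multiscale_graph p l E (r @ [i] @ w) (r @ [j] @ w) = unw E i j / real p ^ (l - 1 - s)"
proof -
  have "multiscale_graph p l E (r @ [i] @ w) (r @ [j] @ w) =
     (map (\<lambda>t. gscale (1 / real p ^ (l - t)) (unw E)) [1..<l+1] ! s) i j"
    unfolding multiscale_graph_def by (rule iprod_coordinate) (use assms in auto)
  also have "\<dots> = unw E i j / real p ^ (l - 1 - s)"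
    using assms(3) by (simp del: upt_Suc add: gscale_def nth_map_upt)
  finally show ?thesis .
qed

lemma multiscale_graph_nonneg: "0 \<le> multiscale_graph p l E u v"
  unfolding multiscale_graph_def by (rule iprod_nonneg) (auto simp: gscale_def unw_def)

lemma multiscale_graph_sym:
  assumes "simple_graph_on p E" "u \<in> tuples p l" "v \<in> tuples p l"
  shows "multiscale_graph p l E u v = multiscale_graph p l E v u"
  unfolding multiscale_graph_def
  by (rule iprod_sym[where p=p])
     (use assms in \<open>auto simp: gscale_def unw_def simple_graph_on_def tuples_def\<close>)


section \<open>Laplacian quadratic forms, centring and cuts\<close>

lemma laplacian_quad_form:
  fixes W :: "'v \<Rightarrow> 'v \<Rightarrow> real"
  assumes fin: "finite V" and sym: "\<And>u v. u \<in> V \<Longrightarrow> v \<in> V \<Longrightarrow> W u v = W v u"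
  shows "quad_form V (laplacian V W) x = (\<Sum>u\<in>V. \<Sum>v\<in>V. W u v * (x u - x v)^2) / 2"
proof -
  have diag: "(\<Sum>v\<in>V. x u * (if u = v then (\<Sum>w\<in>V. W u w) else 0) * x v) = (\<Sum>v\<in>V. W u v * (x u)^2)"
    if "u \<in> V" for u
  proof -
    have "(\<Sum>v\<in>V. x u * (if u = v then (\<Sum>w\<in>V. W u w) else 0) * x v) =
        (\<Sum>v\<in>V. if u = v then x u * (\<Sum>w\<in>V. W u w) * x u else 0)"
      by (rule sum.cong) auto
    also have "\<dots> = x u * (\<Sum>w\<in>V. W u w) * x u" using fin that by simp
    finally show ?thesis
      by (simp add: sum_distrib_left sum_distrib_right power2_eq_square algebra_simps)
  qed
  have swap: "(\<Sum>u\<in>V. \<Sum>v\<in>V. W u v * (x v)^2) = (\<Sum>u\<in>V. \<Sum>v\<in>V. W u v * (x u)^2)"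
    by (subst sum.swap) (auto intro!: sum.cong simp: sym)
  have "quad_form V (laplacian V W) x =
      (\<Sum>u\<in>V. (\<Sum>v\<in>V. x u * (if u = v then (\<Sum>w\<in>V. W u w) else 0) * x v) - (\<Sum>v\<in>V. W u v * x u * x v))"
    unfolding quad_form_def laplacian_def by (simp add: algebra_simps sum_subtractf)
  also have "\<dots> = (\<Sum>u\<in>V. \<Sum>v\<in>V. W u v * (x u)^2) - (\<Sum>u\<in>V. \<Sum>v\<in>V. W u v * x u * x v)"
    by (simp add: diag sum_subtractf)
  moreover have "(\<Sum>u\<in>V. \<Sum>v\<in>V. W u v * (x u - x v)^2) =
      (\<Sum>u\<in>V. \<Sum>v\<in>V. W u v * (x u)^2) + (\<Sum>u\<in>V. \<Sum>v\<in>V. W u v * (x v)^2)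
      - 2 * (\<Sum>u\<in>V. \<Sum>v\<in>V. W u v * x u * x v)"
    by (simp add: power2_diff algebra_simps sum.distrib sum_subtractf sum_distrib_left)
  ultimately show ?thesis unfolding swap by simp
qed

lemma quad_form_scale: "quad_form V M (\<lambda>v. a * x v) = a^2 * quad_form V M x"
  unfolding quad_form_def by (simp add: sum_distrib_left power2_eq_square algebra_simps)

lemma sum_centred: "finite V \<Longrightarrow> (\<Sum>v\<in>V. y v - mean V y) = 0"
  by (cases "card V = 0") (auto simp: mean_def sum_subtractf)

lemma inner_centred:
  assumes "(\<Sum>v\<in>V. x v) = 0"
  shows "(\<Sum>v\<in>V. x v * (y v - mean V y)) = (\<Sum>v\<in>V. x v * y v)"
proof -
  have "(\<Sum>v\<in>V. x v * (y v - mean V y)) = (\<Sum>v\<in>V. x v * y v) - (\<Sum>v\<in>V. x v) * mean V y"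
    by (simp add: right_diff_distrib sum_subtractf sum_distrib_right)
  then show ?thesis using assms by simp
qed

text \<open>The energy of the signal \<open>\<mu> + \<delta> 1\<^sub>C\<close> is \<open>\<delta>\<^sup>2 |\<partial>C|\<close>, counting each cut edge in both
  orientations.\<close>

lemma cut_weight_swap:
  assumes C: "C \<subseteq> V" and sym: "\<And>u v. u \<in> V \<Longrightarrow> v \<in> V \<Longrightarrow> W u v = W v u"
  shows "(\<Sum>u\<in>V - C. \<Sum>v\<in>C. W u v) = cut_weight V W C"
  unfolding cut_weight_def by (subst sum.swap) (use C sym in \<open>auto intro!: sum.cong\<close>)

lemma cut_signal_energy:
  fixes W :: "'v \<Rightarrow> 'v \<Rightarrow> real"
  assumes fin: "finite V" and C: "C \<subseteq> V" and sym: "\<And>u v. u \<in> V \<Longrightarrow> v \<in> V \<Longrightarrow> W u v = W v u"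
    and f: "\<And>v. v \<in> V \<Longrightarrow> f v = \<mu> + \<delta> * (if v \<in> C then 1 else 0)"
  shows "(\<Sum>u\<in>V. \<Sum>v\<in>V. W u v * (f u - f v)^2) = 2 * \<delta>^2 * cut_weight V W C"
proof -
  have V_split: "(\<Sum>v\<in>V. g v) = (\<Sum>v\<in>C. g v) + (\<Sum>v\<in>V - C. g v)" for g :: "'v \<Rightarrow> real"
    using fin C by (metis add.commute sum.subset_diff)
  have inside: "(\<Sum>v\<in>V. W u v * (f u - f v)^2) = \<delta>^2 * (\<Sum>v\<in>V - C. W u v)" if u: "u \<in> C" for u
  proof -
    have "(\<Sum>v\<in>C. W u v * (f u - f v)^2) = 0"
      using u C f by (intro sum.neutral) (auto simp: subset_iff)
    moreover have "(\<Sum>v\<in>V - C. W u v * (f u - f v)^2) = (\<Sum>v\<in>V - C. \<delta>^2 * W u v)"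
      using u C f by (intro sum.cong) (auto simp: subset_iff mult.commute)
    ultimately show ?thesis by (simp add: V_split[of "\<lambda>v. W u v * (f u - f v)^2"] sum_distrib_left)
  qed
  have outside: "(\<Sum>v\<in>V. W u v * (f u - f v)^2) = \<delta>^2 * (\<Sum>v\<in>C. W u v)" if u: "u \<in> V - C" for u
  proof -
    have "(\<Sum>v\<in>V - C. W u v * (f u - f v)^2) = 0"
      using u f by (intro sum.neutral) auto
    moreover have "(\<Sum>v\<in>C. W u v * (f u - f v)^2) = (\<Sum>v\<in>C. \<delta>^2 * W u v)"
      using u C f by (intro sum.cong) (auto simp: subset_iff mult.commute)
    ultimately show ?thesis by (simp add: V_split[of "\<lambda>v. W u v * (f u - f v)^2"] sum_distrib_left)
  qed
  have "(\<Sum>u\<in>V. \<Sum>v\<in>V. W u v * (f u - f v)^2) =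
      (\<Sum>u\<in>C. \<delta>^2 * (\<Sum>v\<in>V - C. W u v)) + (\<Sum>u\<in>V - C. \<delta>^2 * (\<Sum>v\<in>C. W u v))"
    unfolding V_split[of "\<lambda>u. \<Sum>v\<in>V. W u v * (f u - f v)^2"] using inside outside by simp
  also have "\<dots> = \<delta>^2 * cut_weight V W C + \<delta>^2 * (\<Sum>u\<in>V - C. \<Sum>v\<in>C. W u v)"
    by (simp add: cut_weight_def sum_distrib_left)
  finally show ?thesis using cut_weight_swap[OF C sym] by simp
qed

lemma cut_signal_variance:
  fixes \<beta> :: "'v \<Rightarrow> real"
  assumes fin: "finite V" and C: "C \<subseteq> V"
    and f: "\<And>v. v \<in> V \<Longrightarrow> \<beta> v = \<mu> + \<delta> * (if v \<in> C then 1 else 0)"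
    and n: "card V > 0"
  shows "(\<Sum>v\<in>V. (\<beta> v - mean V \<beta>)^2) = \<delta>^2 * real (card C) * real (card (V - C)) / real (card V)"
proof -
  have finC: "finite C" using fin C by (rule rev_finite_subset)
  have V_split: "(\<Sum>v\<in>V. g v) = (\<Sum>v\<in>C. g v) + (\<Sum>v\<in>V - C. g v)" for g :: "'v \<Rightarrow> real"
    using fin C by (metis add.commute sum.subset_diff)
  define c where "c = real (card C)"
  define d where "d = real (card (V - C))"
  define n where "n = real (card V)"
  have nd: "n = c + d" unfolding n_def c_def d_def using card_Diff_subset[OF finC C] card_mono[OF fin C]
    by (simp add: of_nat_diff)
  have n0: "n > 0" using n unfolding n_def by simp
  have "(\<Sum>v\<in>C. \<beta> v) = c * (\<mu> + \<delta>)" unfolding c_def using C f by (simp add: subset_iff)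
  moreover have "(\<Sum>v\<in>V - C. \<beta> v) = d * \<mu>" unfolding d_def using C f by simp
  ultimately have m: "mean V \<beta> = (c * (\<mu> + \<delta>) + d * \<mu>) / n"
    unfolding mean_def n_def V_split[of \<beta>] by simp
  have e1: "\<mu> + \<delta> - mean V \<beta> = \<delta> * d / n" unfolding m using n0 nd by (simp add: field_simps)
  have e2: "\<mu> - mean V \<beta> = - (\<delta> * c / n)" unfolding m using n0 nd by (simp add: field_simps)
  have "(\<Sum>v\<in>C. (\<beta> v - mean V \<beta>)^2) = c * (\<delta> * d / n)^2"
    unfolding c_def e1[symmetric] using C f by (simp add: subset_iff)
  moreover have "(\<Sum>v\<in>V - C. (\<beta> v - mean V \<beta>)^2) = d * (- (\<delta> * c / n))^2"
    unfolding d_def e2[symmetric] using C f by simp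
  moreover have "c * (\<delta> * d / n)^2 + d * (- (\<delta> * c / n))^2 = \<delta>^2 * c * d / n"
  proof -
    have "c * (\<delta> * d / n)^2 + d * (- (\<delta> * c / n))^2 = \<delta>^2 * c * d * (c + d) / n^2"
      by (simp add: power2_eq_square field_simps add_divide_distrib)
    also have "\<dots> = \<delta>^2 * c * d / n" using n0 nd by (simp add: power2_eq_square)
    finally show ?thesis .
  qed
  ultimately show ?thesis unfolding V_split[of "\<lambda>v. (\<beta> v - mean V \<beta>)^2"]
    by (simp add: c_def d_def n_def)
qed

lemma cut_signal_rayleigh:
  fixes W :: "'v \<Rightarrow> 'v \<Rightarrow> real"
  assumes fin: "finite V" and sym: "\<And>u v. u \<in> V \<Longrightarrow> v \<in> V \<Longrightarrow> W u v = W v u"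
    and C: "C \<in> cut_class V W \<rho>"
    and f: "\<And>v. v \<in> V \<Longrightarrow> \<beta> v = \<mu> + \<delta> * (if v \<in> C then 1 else 0)"
  shows "quad_form V (laplacian V W) (\<lambda>v. \<beta> v - mean V \<beta>) \<le> \<rho> * (\<Sum>v\<in>V. (\<beta> v - mean V \<beta>)^2)"
proof -
  have CV: "C \<subseteq> V" "C \<noteq> {}" "C \<noteq> V"
    and cut: "cut_weight V W C / (real (card C) * real (card (V - C))) \<le> \<rho> / real (card V)"
    using C unfolding cut_class_def by auto
  have finC: "finite C" using fin CV(1) by (rule rev_finite_subset)
  have cC: "card C > 0" using finC CV(2) by (simp add: card_gt_0_iff)
  have cD: "card (V - C) > 0" using fin CV by (auto simp: card_gt_0_iff)
  have n: "card V > 0" using fin CV by (auto simp: card_gt_0_iff)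
  have "quad_form V (laplacian V W) (\<lambda>v. \<beta> v - mean V \<beta>) = (\<Sum>u\<in>V. \<Sum>v\<in>V. W u v * (\<beta> u - \<beta> v)^2) / 2"
    using laplacian_quad_form[where W = W, OF fin sym, of "\<lambda>v. \<beta> v - mean V \<beta>"] by simp
  also have "\<dots> = \<delta>^2 * cut_weight V W C"
    using cut_signal_energy[where W = W, OF fin CV(1) sym f] by simp
  also have "\<dots> \<le> \<delta>^2 * (\<rho> * real (card C) * real (card (V - C)) / real (card V))"
    using cut cC cD n by (intro mult_left_mono) (auto simp: field_simps)
  also have "\<dots> = \<rho> * (\<Sum>v\<in>V. (\<beta> v - mean V \<beta>)^2)"
    using cut_signal_variance[OF fin CV(1) f n] by simp
  finally show ?thesis .
qed


section \<open>The spectral scan statistic\<close>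

text \<open>By Cauchy-Schwarz the values in the supremum defining the statistic are bounded by
  \<open>\<parallel>y - mean y\<parallel>\<^sup>2\<close>; this makes the supremum well behaved.\<close>

lemma scan_set_bdd:
  fixes W :: "'v \<Rightarrow> 'v \<Rightarrow> real"
  shows "bdd_above {(\<Sum>v\<in>V. x v * (y v - mean V y))\<^sup>2 | x.
            quad_form V (laplacian V W) x \<le> \<rho> \<and> vnorm V x \<le> 1 \<and> (\<Sum>v\<in>V. x v) = 0}"
proof (rule bdd_aboveI, clarify)
  fix x :: "'v \<Rightarrow> real" assume "vnorm V x \<le> 1"
  then have x1: "(\<Sum>v\<in>V. (x v)^2) \<le> 1" unfolding vnorm_def by simp
  have "(\<Sum>v\<in>V. x v * (y v - mean V y))\<^sup>2 \<le> (\<Sum>v\<in>V. (x v)^2) * (\<Sum>v\<in>V. (y v - mean V y)^2)"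
    by (rule Cauchy_Schwarz_ineq_sum)
  also have "\<dots> \<le> 1 * (\<Sum>v\<in>V. (y v - mean V y)^2)"
    by (rule mult_right_mono) (use x1 in \<open>auto intro: sum_nonneg\<close>)
  finally show "(\<Sum>v\<in>V. x v * (y v - mean V y))\<^sup>2 \<le> (\<Sum>v\<in>V. (y v - mean V y)^2)" by simp
qed

lemma scan_ge_feasible:
  assumes "quad_form V (laplacian V W) x \<le> \<rho>" "vnorm V x \<le> 1" "(\<Sum>v\<in>V. x v) = 0"
  shows "(\<Sum>v\<in>V. x v * y v)\<^sup>2 \<le> spectral_scan V W \<rho> y"
proof -
  have "(\<Sum>v\<in>V. x v * y v)\<^sup>2 = (\<Sum>v\<in>V. x v * (y v - mean V y))\<^sup>2"
    using inner_centred[OF assms(3)] by simp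
  also have "\<dots> \<le> spectral_scan V W \<rho> y"
    unfolding spectral_scan_def by (rule cSup_upper[OF _ scan_set_bdd]) (use assms in auto)
  finally show ?thesis .
qed

text \<open>A bound on all feasible directions bounds the statistic (the set is nonempty for \<open>\<rho> \<ge> 0\<close>).\<close>

lemma scan_le:
  assumes rho: "0 \<le> \<rho>"
    and bound: "\<And>x. quad_form V (laplacian V W) x \<le> \<rho> \<Longrightarrow> (\<Sum>v\<in>V. x v) = 0 \<Longrightarrow>
       (\<Sum>v\<in>V. x v * y v)\<^sup>2 \<le> B"
  shows "spectral_scan V W \<rho> y \<le> B"
  unfolding spectral_scan_def
proof (rule cSup_least)
  show "{(\<Sum>v\<in>V. x v * (y v - mean V y))\<^sup>2 | x.
      quad_form V (laplacian V W) x \<le> \<rho> \<and> vnorm V x \<le> 1 \<and> (\<Sum>v\<in>V. x v) = 0} \<noteq> {}"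
    using rho by (auto simp: quad_form_def vnorm_def intro!: exI[of _ "\<lambda>_. 0"])
qed (auto simp: inner_centred bound)

lemma normalised_cut_signal:
  fixes W :: "'v \<Rightarrow> 'v \<Rightarrow> real"
  assumes fin: "finite V" and sym: "\<And>u v. u \<in> V \<Longrightarrow> v \<in> V \<Longrightarrow> W u v = W v u"
    and C: "C \<in> cut_class V W \<rho>"
    and f: "\<And>v. v \<in> V \<Longrightarrow> \<beta> v = \<mu> + \<delta> * (if v \<in> C then 1 else 0)"
    and N0: "vnorm V (\<lambda>v. \<beta> v - mean V \<beta>) > 0"
  defines "x \<equiv> \<lambda>v. (\<beta> v - mean V \<beta>) / vnorm V (\<lambda>v. \<beta> v - mean V \<beta>)"
  shows "(\<Sum>v\<in>V. (x v)^2) = 1" and "quad_form V (laplacian V W) x \<le> \<rho>"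
    and "(\<Sum>v\<in>V. x v) = 0" and "(\<Sum>v\<in>V. x v * \<beta> v) = vnorm V (\<lambda>v. \<beta> v - mean V \<beta>)"
proof -
  define d where "d = (\<lambda>v. \<beta> v - mean V \<beta>)"
  define N where "N = vnorm V d"
  have x: "x = (\<lambda>v. d v / N)" unfolding x_def d_def N_def by simp
  have N_pos: "N > 0" using N0 unfolding N_def d_def .
  have N2: "N^2 = (\<Sum>v\<in>V. (d v)^2)" unfolding N_def vnorm_def by (simp add: sum_nonneg)
  show x2: "(\<Sum>v\<in>V. (x v)^2) = 1"
    unfolding x using N_pos by (simp add: power_divide sum_divide_distrib[symmetric] N2[symmetric])
  show x_sum: "(\<Sum>v\<in>V. x v) = 0"
    unfolding x d_def using sum_centred[OF fin] by (simp add: sum_divide_distrib[symmetric])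
  have "quad_form V (laplacian V W) x = quad_form V (laplacian V W) d / N^2"
    using quad_form_scale[of V _ "1 / N" d] unfolding x by (simp add: power_divide)
  also have "\<dots> \<le> \<rho> * N^2 / N^2"
    using cut_signal_rayleigh[where W = W, OF fin sym C f] unfolding N2 d_def
    by (intro divide_right_mono) (auto intro: sum_nonneg)
  finally show "quad_form V (laplacian V W) x \<le> \<rho>" using N_pos by simp
  have "(\<Sum>v\<in>V. x v * \<beta> v) = (\<Sum>v\<in>V. x v * d v)"
    unfolding d_def using inner_centred[OF x_sum] by simp
  also have "\<dots> = N^2 / N" unfolding x N2 by (simp add: power2_eq_square sum_divide_distrib)
  finally show "(\<Sum>v\<in>V. x v * \<beta> v) = vnorm V (\<lambda>v. \<beta> v - mean V \<beta>)"
    using N_pos unfolding N_def d_def by (simp add: power2_eq_square)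
qed

text \<open>Under the alternative the statistic is at least \<open>(\<parallel>\<beta> - mean \<beta>\<parallel> + x\<^sup>T e)\<^sup>2\<close> for a unit
  vector \<open>x\<close>, namely the normalised centred signal.\<close>

lemma scan_ge_cut_signal:
  fixes W :: "'v \<Rightarrow> 'v \<Rightarrow> real"
  assumes fin: "finite V" and sym: "\<And>u v. u \<in> V \<Longrightarrow> v \<in> V \<Longrightarrow> W u v = W v u"
    and beta: "\<beta> \<in> Theta1 V W \<rho> \<eta>" and eta: "\<eta> > 0"
  obtains x where "(\<Sum>v\<in>V. (x v)^2) = 1"
    and "\<And>e. (vnorm V (\<lambda>v. \<beta> v - mean V \<beta>) + (\<Sum>v\<in>V. x v * e v))^2 \<le> spectral_scan V W \<rho> (\<lambda>v. \<beta> v + e v)"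
    and "vnorm V (\<lambda>v. \<beta> v - mean V \<beta>) \<ge> \<eta>"
proof -
  obtain \<mu> \<delta> C where C: "C \<in> cut_class V W \<rho>"
    and f: "\<forall>v\<in>V. \<beta> v = \<mu> + \<delta> * (if v \<in> C then 1 else 0)"
    and norm: "vnorm V (\<lambda>v. \<beta> v - mean V \<beta>) \<ge> \<eta>"
    using beta unfolding Theta1_def by blast
  have N0: "vnorm V (\<lambda>v. \<beta> v - mean V \<beta>) > 0" using norm eta by simp
  have f': "\<And>v. v \<in> V \<Longrightarrow> \<beta> v = \<mu> + \<delta> * (if v \<in> C then 1 else 0)" using f by blast
  note normalised = normalised_cut_signal[where W = W, OF fin sym C f' N0]
  define x where "x = (\<lambda>v. (\<beta> v - mean V \<beta>) / vnorm V (\<lambda>v. \<beta> v - mean V \<beta>))"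
  have x2: "(\<Sum>v\<in>V. (x v)^2) = 1" unfolding x_def by (rule normalised(1))
  have x_quad: "quad_form V (laplacian V W) x \<le> \<rho>" unfolding x_def by (rule normalised(2))
  have x_sum: "(\<Sum>v\<in>V. x v) = 0" unfolding x_def by (rule normalised(3))
  have x_beta: "(\<Sum>v\<in>V. x v * \<beta> v) = vnorm V (\<lambda>v. \<beta> v - mean V \<beta>)"
    unfolding x_def by (rule normalised(4))
  have x_norm: "vnorm V x \<le> 1" using x2 unfolding vnorm_def by simp
  have "(vnorm V (\<lambda>v. \<beta> v - mean V \<beta>) + (\<Sum>v\<in>V. x v * e v))^2 \<le> spectral_scan V W \<rho> (\<lambda>v. \<beta> v + e v)" for e
    using scan_ge_feasible[OF x_quad x_norm x_sum, of "\<lambda>v. \<beta> v + e v"] x_beta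
    by (simp add: distrib_left sum.distrib)
  then show ?thesis by (rule that[OF x2 _ norm])
qed


section \<open>The multiscale telescoping bound\<close>

definition block_sum :: "nat \<Rightarrow> nat \<Rightarrow> (nat list \<Rightarrow> real) \<Rightarrow> nat \<Rightarrow> nat list \<Rightarrow> real" where
  "block_sum p l g t q = (\<Sum>w\<in>tuples p (l - t). g (q @ w))"

text \<open>The inner product of \<open>x\<close> and \<open>e\<close> after both are averaged over the blocks of depth \<open>t\<close>;
  it equals \<open>x\<^sup>T e\<close> at \<open>t = l\<close> and vanishes at \<open>t = 0\<close> when \<open>x\<close> has mean zero.\<close>

definition level_pairing :: "nat \<Rightarrow> nat \<Rightarrow> (nat list \<Rightarrow> real) \<Rightarrow> (nat list \<Rightarrow> real) \<Rightarrow> nat \<Rightarrow> real" where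
  "level_pairing p l x e t =
     (\<Sum>q\<in>tuples p t. block_sum p l x t q * block_sum p l e t q / real p ^ (l - t))"

lemma block_sum_split:
  assumes "t < l"
  shows "block_sum p l g t r = (\<Sum>i<p. block_sum p l g (Suc t) (r @ [i]))"
proof -
  have "l - t = Suc (l - Suc t)" using assms by simp
  then show ?thesis unfolding block_sum_def by (simp add: sum_tuples_cons)
qed

lemma level_pairing_increment:
  assumes "t < l" and p: "p > 0"
  shows "level_pairing p l x e (Suc t) - level_pairing p l x e t =
    (\<Sum>q\<in>tuples p (Suc t). (block_sum p l e (Suc t) q / real p ^ (l - Suc t)) *
        (block_sum p l x (Suc t) q - block_sum p l x t (butlast q) / real p))"
proof -
  define P where "P = real p ^ (l - Suc t)"
  have lt: "l - t = Suc (l - Suc t)" using assms by simp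
  have P0: "P > 0" using p unfolding P_def by simp
  have "level_pairing p l x e (Suc t) =
      (\<Sum>r\<in>tuples p t. \<Sum>i<p. block_sum p l x (Suc t) (r@[i]) * block_sum p l e (Suc t) (r@[i]) / P)"
    unfolding level_pairing_def sum_tuples_snoc P_def ..
  moreover have "level_pairing p l x e t =
      (\<Sum>r\<in>tuples p t. \<Sum>i<p. block_sum p l x t r * block_sum p l e (Suc t) (r@[i]) / (real p * P))"
    unfolding level_pairing_def lt P_def using block_sum_split[OF assms(1), of p e]
    by (simp add: sum_distrib_left sum_divide_distrib)
  ultimately show ?thesis unfolding sum_tuples_snoc P_def[symmetric]
    using p P0 by (simp add: sum_subtractf[symmetric] field_simps)
qed

lemma deviation_from_average:
  fixes X :: "nat \<Rightarrow> real" assumes p: "p > 0"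
  shows "(X i - (\<Sum>j<p. X j) / real p)^2 \<le> (\<Sum>j<p. (X i - X j)^2) / real p"
proof -
  have "X i - (\<Sum>j<p. X j) / real p = (\<Sum>j<p. (X i - X j)) / real p"
    using p by (simp add: sum_subtractf field_simps)
  then have "(X i - (\<Sum>j<p. X j) / real p)^2 = (\<Sum>j<p. (X i - X j))^2 / (real p)^2"
    by (simp add: power_divide)
  also have "\<dots> \<le> ((\<Sum>j<p. (X i - X j)^2) * real p) / (real p)^2"
    by (rule divide_right_mono) (use sum_squared_le_sum_of_squares[of "\<lambda>j. X i - X j" "{..<p}"] in auto)
  also have "\<dots> = (\<Sum>j<p. (X i - X j)^2) / real p"
    using p by (simp add: power2_eq_square)
  finally show ?thesis .
qed

lemma sibling_spread:
  fixes g :: "nat \<Rightarrow> 'w \<Rightarrow> real"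
  assumes p: "p > 0" and conn: "connected_on p E"
  shows "(\<Sum>i<p. ((\<Sum>w\<in>Ws. g i w) - (\<Sum>j<p. \<Sum>w\<in>Ws. g j w) / real p)^2) \<le>
    real (card Ws) * real p ^ 5 * (\<Sum>w\<in>Ws. \<Sum>a<p. \<Sum>b<p. unw E a b * (g a w - g b w)^2)"
proof -
  define X where "X i = (\<Sum>w\<in>Ws. g i w)" for i
  have block: "(X i - X j)^2 \<le> real (card Ws) * (\<Sum>w\<in>Ws. (g i w - g j w)^2)" for i j
    using sum_squared_le_sum_of_squares[of "\<lambda>w. g i w - g j w" Ws]
    unfolding X_def by (simp add: sum_subtractf mult.commute)
  have "(\<Sum>i<p. (X i - (\<Sum>j<p. X j) / real p)^2) \<le> (\<Sum>i<p. (\<Sum>j<p. (X i - X j)^2) / real p)"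
    by (intro sum_mono deviation_from_average p)
  also have "\<dots> \<le> (\<Sum>i<p. (\<Sum>j<p. real (card Ws) * (\<Sum>w\<in>Ws. (g i w - g j w)^2)) / real p)"
    by (intro sum_mono divide_right_mono block) simp
  also have "\<dots> = real (card Ws) / real p * (\<Sum>i<p. \<Sum>j<p. \<Sum>w\<in>Ws. (g i w - g j w)^2)"
    by (simp add: sum_distrib_left sum_divide_distrib)
  also have "\<dots> = real (card Ws) / real p * (\<Sum>w\<in>Ws. \<Sum>i<p. \<Sum>j<p. (g i w - g j w)^2)"
    by (simp only: sum.swap[of _ "{..<p}" Ws])
  also have "\<dots> \<le> real (card Ws) / real p *
      (\<Sum>w\<in>Ws. real p ^ 6 * (\<Sum>a<p. \<Sum>b<p. unw E a b * (g a w - g b w)^2))"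
    by (intro mult_left_mono sum_mono connected_poincare[OF conn]) simp
  also have "\<dots> = real (card Ws) * real p ^ 5 * (\<Sum>w\<in>Ws. \<Sum>a<p. \<Sum>b<p. unw E a b * (g a w - g b w)^2)"
    using p by (simp add: sum_distrib_left[symmetric] power_eq_if)
  finally show ?thesis unfolding X_def .
qed

lemma level_deviation_bound:
  assumes tl: "t < l" and p: "p > 0" and conn: "connected_on p E"
  shows "(\<Sum>q\<in>tuples p (Suc t). (block_sum p l x (Suc t) q - block_sum p l x t (butlast q) / real p)^2) \<le>
     real p ^ (l - Suc t) * real p ^ 5 * (\<Sum>r\<in>tuples p t. \<Sum>w\<in>tuples p (l - Suc t).
        \<Sum>a<p. \<Sum>b<p. unw E a b * (x (r @ [a] @ w) - x (r @ [b] @ w))^2)"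
proof -
  define m where "m = l - Suc t"
  have blk: "block_sum p l x (Suc t) (r @ [i]) = (\<Sum>w\<in>tuples p m. x (r @ [i] @ w))" for r i
    unfolding block_sum_def m_def by simp
  have "(\<Sum>q\<in>tuples p (Suc t). (block_sum p l x (Suc t) q - block_sum p l x t (butlast q) / real p)^2) =
      (\<Sum>r\<in>tuples p t. \<Sum>i<p. ((\<Sum>w\<in>tuples p m. x (r @ [i] @ w))
         - (\<Sum>j<p. \<Sum>w\<in>tuples p m. x (r @ [j] @ w)) / real p)^2)"
    unfolding sum_tuples_snoc using block_sum_split[OF tl] by (simp add: blk)
  also have "\<dots> \<le> (\<Sum>r\<in>tuples p t. real p ^ m * real p ^ 5 * (\<Sum>w\<in>tuples p m.
        \<Sum>a<p. \<Sum>b<p. unw E a b * (x (r @ [a] @ w) - x (r @ [b] @ w))^2))"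
  proof (rule sum_mono)
    fix r
    show "(\<Sum>i<p. ((\<Sum>w\<in>tuples p m. x (r @ [i] @ w))
         - (\<Sum>j<p. \<Sum>w\<in>tuples p m. x (r @ [j] @ w)) / real p)^2) \<le>
      real p ^ m * real p ^ 5 * (\<Sum>w\<in>tuples p m.
        \<Sum>a<p. \<Sum>b<p. unw E a b * (x (r @ [a] @ w) - x (r @ [b] @ w))^2)"
      using sibling_spread[OF p conn, where Ws = "tuples p m" and g = "\<lambda>i w. x (r @ [i] @ w)"] by simp
  qed
  finally show ?thesis unfolding m_def by (simp add: sum_distrib_left)
qed

text \<open>The level-\<open>t\<close> energy is at most \<open>p^(l-t-1)\<close> times the full Dirichlet energy of \<open>x\<close> on \<open>G\<close>,
  because the edges of level \<open>t\<close> have weight \<open>p^-(l-t-1)\<close> in \<open>G\<close>.\<close>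

lemma level_energy_bound:
  assumes tl: "t < l" and p: "p > 0"
  shows "(\<Sum>r\<in>tuples p t. \<Sum>w\<in>tuples p (l - Suc t).
        \<Sum>a<p. \<Sum>b<p. unw E a b * (x (r @ [a] @ w) - x (r @ [b] @ w))^2) \<le>
     real p ^ (l - Suc t) * (\<Sum>u\<in>tuples p l. \<Sum>v\<in>tuples p l.
        multiscale_graph p l E u v * (x u - x v)^2)"
proof -
  define m where "m = l - Suc t"
  have l: "l = t + Suc m" using tl unfolding m_def by simp
  define F where "F u v = multiscale_graph p l E u v * (x u - x v)^2" for u v
  have F0: "0 \<le> F u v" for u v unfolding F_def using multiscale_graph_nonneg by simp
  have edge: "unw E a b * (x (r @ [a] @ w) - x (r @ [b] @ w))^2 = real p ^ m * F (r @ [a] @ w) (r @ [b] @ w)"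
    if "r \<in> tuples p t" "w \<in> tuples p m" for r w a b
  proof (cases "a = b")
    case False
    have "multiscale_graph p l E (r @ [a] @ w) (r @ [b] @ w) = unw E a b / real p ^ (l - 1 - t)"
      by (rule multiscale_graph_coordinate) (use that l False in \<open>auto simp: tuples_def\<close>)
    then show ?thesis using p l by (simp add: F_def)
  qed (simp add: F_def)
  have "(\<Sum>r\<in>tuples p t. \<Sum>w\<in>tuples p m.
        \<Sum>a<p. \<Sum>b<p. unw E a b * (x (r @ [a] @ w) - x (r @ [b] @ w))^2) =
      (\<Sum>r\<in>tuples p t. \<Sum>w\<in>tuples p m. \<Sum>a<p. \<Sum>b<p. real p ^ m * F (r @ [a] @ w) (r @ [b] @ w))"
    by (intro sum.cong refl) (simp only: edge)
  also have "\<dots> = real p ^ m * (\<Sum>r\<in>tuples p t. \<Sum>a<p. \<Sum>w\<in>tuples p m. \<Sum>b<p. F (r @ [a] @ w) (r @ [b] @ w))"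
    by (simp add: sum_distrib_left sum.swap[of _ "{..<p}" "tuples p m"])
  also have "\<dots> \<le> real p ^ m * (\<Sum>r\<in>tuples p t. \<Sum>a<p. \<Sum>w\<in>tuples p m. \<Sum>v\<in>tuples p l. F (r @ [a] @ w) v)"
    by (intro mult_left_mono sum_mono sum_coordinate_le_sum_tuples[OF _ _ l F0]) auto
  also have "\<dots> = real p ^ m * (\<Sum>u\<in>tuples p l. \<Sum>v\<in>tuples p l. F u v)"
    unfolding l sum_tuples_at_coordinate ..
  finally show ?thesis unfolding m_def F_def .
qed

text \<open>Cauchy-Schwarz on one increment, combined with the two previous bounds.\<close>

lemma level_increment_bound:
  assumes tl: "t < l" and p: "p > 0" and conn: "connected_on p E"
  shows "(level_pairing p l x e (Suc t) - level_pairing p l x e t)^2 \<le>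
    real p ^ 5 * (\<Sum>u\<in>tuples p l. \<Sum>v\<in>tuples p l. multiscale_graph p l E u v * (x u - x v)^2) *
    (\<Sum>q\<in>tuples p (Suc t). (block_sum p l e (Suc t) q)^2)"
proof -
  define P where "P = real p ^ (l - Suc t)"
  define Q where "Q = (\<Sum>u\<in>tuples p l. \<Sum>v\<in>tuples p l. multiscale_graph p l E u v * (x u - x v)^2)"
  define A where "A = (\<Sum>q\<in>tuples p (Suc t). (block_sum p l e (Suc t) q)^2)"
  define B where "B = (\<Sum>q\<in>tuples p (Suc t).
     (block_sum p l x (Suc t) q - block_sum p l x t (butlast q) / real p)^2)"
  have P0: "P > 0" using p unfolding P_def by simp
  have A0: "0 \<le> A" unfolding A_def by (rule sum_nonneg) simp
  have B_le: "B \<le> P * real p ^ 5 * (P * Q)"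
    unfolding B_def P_def Q_def
    by (rule order_trans[OF level_deviation_bound[OF tl p conn]])
       (intro mult_left_mono level_energy_bound[OF tl p]; simp)
  have "(level_pairing p l x e (Suc t) - level_pairing p l x e t)^2 \<le>
      (\<Sum>q\<in>tuples p (Suc t). (block_sum p l e (Suc t) q / P)^2) * B"
    unfolding level_pairing_increment[OF tl p] B_def P_def by (rule Cauchy_Schwarz_ineq_sum)
  also have "\<dots> = A / P^2 * B"
    unfolding A_def by (simp add: power_divide sum_divide_distrib)
  also have "\<dots> \<le> A / P^2 * (P * real p ^ 5 * (P * Q))"
    by (rule mult_left_mono[OF B_le]) (simp add: A0)
  also have "\<dots> = real p ^ 5 * Q * A"
    using P0 by (simp add: field_simps power2_eq_square)
  finally show ?thesis unfolding Q_def A_def .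
qed

lemma multiscale_telescoping:
  assumes p: "p > 0" and conn: "connected_on p E" and x0: "(\<Sum>v\<in>tuples p l. x v) = 0"
  shows "(\<Sum>v\<in>tuples p l. x v * e v)^2 \<le>
    real l * real p ^ 5 * (\<Sum>u\<in>tuples p l. \<Sum>v\<in>tuples p l. multiscale_graph p l E u v * (x u - x v)^2) *
    (\<Sum>t<l. \<Sum>q\<in>tuples p (Suc t). (block_sum p l e (Suc t) q)^2)"
proof -
  define Q where "Q = (\<Sum>u\<in>tuples p l. \<Sum>v\<in>tuples p l. multiscale_graph p l E u v * (x u - x v)^2)"
  define d where "d t = level_pairing p l x e (Suc t) - level_pairing p l x e t" for t
  have top: "level_pairing p l x e l = (\<Sum>v\<in>tuples p l. x v * e v)"
    unfolding level_pairing_def block_sum_def by simp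
  have bottom: "level_pairing p l x e 0 = 0"
    unfolding level_pairing_def block_sum_def using x0 by simp
  have "(\<Sum>v\<in>tuples p l. x v * e v) = (\<Sum>t<l. d t)"
    unfolding d_def sum_lessThan_telescope top bottom by simp
  then have "(\<Sum>v\<in>tuples p l. x v * e v)^2 \<le> (\<Sum>t<l. (d t)^2) * real l"
    using sum_squared_le_sum_of_squares[of d "{..<l}"] by simp
  also have "\<dots> \<le> (\<Sum>t<l. real p ^ 5 * Q * (\<Sum>q\<in>tuples p (Suc t). (block_sum p l e (Suc t) q)^2)) * real l"
    by (intro mult_right_mono sum_mono) (auto simp: d_def Q_def intro: level_increment_bound[OF _ p conn])
  also have "\<dots> = real l * real p ^ 5 * Q * (\<Sum>t<l. \<Sum>q\<in>tuples p (Suc t). (block_sum p l e (Suc t) q)^2)"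
    by (simp only: sum_distrib_left[symmetric]) (simp only: mult_ac)
  finally show ?thesis unfolding Q_def .
qed

text \<open>Under the null hypothesis the statistic only sees the noise, and the telescoping bound
  applies to every feasible direction.\<close>

lemma scan_null_bound:
  assumes p: "p > 0" and conn: "connected_on p E" and g: "simple_graph_on p E" and rho: "0 \<le> \<rho>"
    and beta: "\<forall>v\<in>tuples p l. \<beta> v = \<mu>"
  shows "spectral_scan (tuples p l) (multiscale_graph p l E) \<rho> (\<lambda>v. \<beta> v + e v) \<le>
    real l * real p ^ 5 * (2 * \<rho>) * (\<Sum>t<l. \<Sum>q\<in>tuples p (Suc t). (block_sum p l e (Suc t) q)^2)"
proof (rule scan_le[OF rho])
  fix x assume quad: "quad_form (tuples p l) (laplacian (tuples p l) (multiscale_graph p l E)) x \<le> \<rho>"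
    and x0: "(\<Sum>v\<in>tuples p l. x v) = 0"
  define Q where "Q = (\<Sum>u\<in>tuples p l. \<Sum>v\<in>tuples p l. multiscale_graph p l E u v * (x u - x v)^2)"
  have Q_le: "Q \<le> 2 * \<rho>"
    using quad laplacian_quad_form[of "tuples p l" "multiscale_graph p l E" x,
        OF finite_tuples multiscale_graph_sym[OF g]]
    unfolding Q_def by simp
  have "(\<Sum>v\<in>tuples p l. x v * (\<beta> v + e v)) = (\<Sum>v\<in>tuples p l. x v * e v) + \<mu> * (\<Sum>v\<in>tuples p l. x v)"
    using beta by (simp add: distrib_left sum.distrib sum_distrib_left mult.commute)
  then have "(\<Sum>v\<in>tuples p l. x v * (\<beta> v + e v))^2 = (\<Sum>v\<in>tuples p l. x v * e v)^2"
    using x0 by simp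
  also have "\<dots> \<le> real l * real p ^ 5 * Q * (\<Sum>t<l. \<Sum>q\<in>tuples p (Suc t). (block_sum p l e (Suc t) q)^2)"
    unfolding Q_def by (rule multiscale_telescoping[OF p conn x0])
  also have "\<dots> \<le> real l * real p ^ 5 * (2 * \<rho>) * (\<Sum>t<l. \<Sum>q\<in>tuples p (Suc t). (block_sum p l e (Suc t) q)^2)"
    using Q_le by (intro mult_right_mono mult_left_mono sum_nonneg) auto
  finally show "(\<Sum>v\<in>tuples p l. x v * (\<beta> v + e v))^2 \<le>
    real l * real p ^ 5 * (2 * \<rho>) * (\<Sum>t<l. \<Sum>q\<in>tuples p (Suc t). (block_sum p l e (Suc t) q)^2)" .
qed

lemma block_sum_linear:
  assumes q: "q \<in> tuples p t" and tl: "t \<le> l"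
  defines "I \<equiv> (\<lambda>w. q @ w) ` tuples p (l - t)"
  shows "block_sum p l e t q = (\<Sum>v\<in>tuples p l. (if v \<in> I then 1 else 0) * e v)"
    and "(\<Sum>v\<in>tuples p l. (if v \<in> I then 1 else (0::real))^2) = real p ^ (l - t)"
proof -
  have inj: "inj_on (\<lambda>w. q @ w) (tuples p (l - t))" by (auto simp: inj_on_def)
  have sub: "I \<subseteq> tuples p l" unfolding I_def using q tl by (auto simp: tuples_def)
  have "(\<Sum>v\<in>tuples p l. (if v \<in> I then 1 else 0) * e v) = (\<Sum>v\<in>tuples p l. if v \<in> I then e v else 0)"
    by (rule sum.cong) auto
  also have "\<dots> = (\<Sum>v\<in>I. e v)"
    using sub by (simp add: sum.inter_restrict[symmetric] Int_absorb1)
  also have "\<dots> = block_sum p l e t q" unfolding I_def block_sum_def by (simp add: sum.reindex[OF inj])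
  finally show "block_sum p l e t q = (\<Sum>v\<in>tuples p l. (if v \<in> I then 1 else 0) * e v)" ..
  have "(\<Sum>v\<in>tuples p l. (if v \<in> I then 1 else (0::real))^2) = (\<Sum>v\<in>tuples p l. if v \<in> I then 1 else 0)"
    by (rule sum.cong) auto
  also have "\<dots> = real (card I)"
    using sub by (simp add: sum.inter_restrict[symmetric] Int_absorb1)
  also have "card I = p ^ (l - t)" unfolding I_def by (simp add: card_image[OF inj])
  finally show "(\<Sum>v\<in>tuples p l. (if v \<in> I then 1 else (0::real))^2) = real p ^ (l - t)" by simp
qed

lemma block_energy_expectation:
  assumes s: "\<sigma> > 0"
  shows "integrable (noise (tuples p l) \<sigma>) (\<lambda>e. \<Sum>t<l. \<Sum>q\<in>tuples p (Suc t). (block_sum p l e (Suc t) q)^2)"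
    "(\<integral>e. (\<Sum>t<l. \<Sum>q\<in>tuples p (Suc t). (block_sum p l e (Suc t) q)^2) \<partial>noise (tuples p l) \<sigma>) =
       real l * \<sigma>^2 * real p ^ l"
proof -
  define a where "a t q v = (if v \<in> (\<lambda>w. q @ w) ` tuples p (l - Suc t) then 1 else (0::real))" for t q v
  note moment = noise_linear_second_moment[OF s finite_tuples]
  have eq: "(\<lambda>e. \<Sum>t<l. \<Sum>q\<in>tuples p (Suc t). (block_sum p l e (Suc t) q)^2) =
      (\<lambda>e. \<Sum>t<l. \<Sum>q\<in>tuples p (Suc t). (\<Sum>v\<in>tuples p l. a t q v * e v)^2)"
    unfolding a_def by (intro ext sum.cong refl) (simp add: block_sum_linear(1))
  show "integrable (noise (tuples p l) \<sigma>) (\<lambda>e. \<Sum>t<l. \<Sum>q\<in>tuples p (Suc t). (block_sum p l e (Suc t) q)^2)"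
    unfolding eq by (intro Bochner_Integration.integrable_sum moment(1))
  have "(\<integral>e. (\<Sum>t<l. \<Sum>q\<in>tuples p (Suc t). (block_sum p l e (Suc t) q)^2) \<partial>noise (tuples p l) \<sigma>) =
      (\<Sum>t<l. \<Sum>q\<in>tuples p (Suc t). \<sigma>^2 * (\<Sum>v\<in>tuples p l. (a t q v)^2))"
    unfolding eq using moment
    by (simp add: Bochner_Integration.integral_sum Bochner_Integration.integrable_sum)
  also have "\<dots> = (\<Sum>t<l. \<Sum>q\<in>tuples p (Suc t). \<sigma>^2 * real p ^ (l - Suc t))"
    by (intro sum.cong refl) (simp add: a_def block_sum_linear(2))
  also have "\<dots> = (\<Sum>t<l. \<sigma>^2 * real p ^ l)"
  proof (intro sum.cong refl)
    fix t assume "t \<in> {..<l}"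
    then have "real p ^ Suc t * real p ^ (l - Suc t) = real p ^ l"
      by (metis Suc_leI add_diff_inverse_nat lessThan_iff not_less power_add)
    then show "(\<Sum>q\<in>tuples p (Suc t). \<sigma>^2 * real p ^ (l - Suc t)) = \<sigma>^2 * real p ^ l"
      by (simp add: algebra_simps)
  qed
  finally show "(\<integral>e. (\<Sum>t<l. \<Sum>q\<in>tuples p (Suc t). (block_sum p l e (Suc t) q)^2) \<partial>noise (tuples p l) \<sigma>) =
       real l * \<sigma>^2 * real p ^ l" by simp
qed


section \<open>Error bounds of the scan test\<close>

text \<open>Type-I error at level \<open>\<tau>\<close>: Markov's inequality applied to the telescoping bound.\<close>

lemma type1_error_bound:
  assumes p: "p > 0" and g: "simple_graph_on p E" and conn: "connected_on p E"
    and rho: "0 \<le> \<rho>" and s: "\<sigma> > 0" and tau: "\<tau> > 0" and beta: "\<beta> \<in> Theta0 (tuples p l)"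
  shows "prob_obs (tuples p l) \<sigma> \<beta> (\<lambda>y. spectral_scan (tuples p l) (multiscale_graph p l E) \<rho> y > \<tau>)
    \<le> 2 * \<rho> * (real l)^2 * real p ^ (l + 5) * \<sigma>^2 / \<tau>"
proof -
  define A where "A e = (\<Sum>t<l. \<Sum>q\<in>tuples p (Suc t). (block_sum p l e (Suc t) q)^2)" for e
  define K where "K = real l * real p ^ 5 * (2 * \<rho>)"
  obtain \<mu> where mu: "\<forall>v\<in>tuples p l. \<beta> v = \<mu>" using beta unfolding Theta0_def by blast
  note A_moments = block_energy_expectation[OF s, of p l, folded A_def]
  have "prob_obs (tuples p l) \<sigma> \<beta> (\<lambda>y. spectral_scan (tuples p l) (multiscale_graph p l E) \<rho> y > \<tau>)
      \<le> (\<integral>e. K * A e \<partial>noise (tuples p l) \<sigma>) / \<tau>"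
  proof (rule prob_obs_Markov[OF s tau])
    show "integrable (noise (tuples p l) \<sigma>) (\<lambda>e. K * A e)" using A_moments(1) by simp
    show "0 \<le> K * A e" for e unfolding K_def A_def using rho by (intro mult_nonneg_nonneg sum_nonneg) auto
    show "\<tau> \<le> K * A e"
      if "spectral_scan (tuples p l) (multiscale_graph p l E) \<rho> (\<lambda>v. \<beta> v + e v) > \<tau>" for e
      using that scan_null_bound[OF p conn g rho mu, of e] unfolding K_def A_def by simp
  qed
  also have "\<dots> = 2 * \<rho> * (real l)^2 * real p ^ (l + 5) * \<sigma>^2 / \<tau>"
    using A_moments(2) unfolding K_def by (simp add: power_add power2_eq_square algebra_simps)
  finally show ?thesis .
qed

lemma shifted_square_bound:
  fixes M z \<eta> :: real
  assumes M: "\<eta> \<le> M" and eta: "0 < \<eta>" and close: "(M + z)^2 \<le> \<eta>^2 / 4"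
  shows "\<eta>^2 / 4 \<le> z^2"
proof -
  have "(M + z)^2 \<le> (\<eta> / 2)^2" using close by (simp add: power_divide)
  then have "\<bar>M + z\<bar> \<le> \<eta> / 2" using eta by (simp add: abs_le_square_iff[symmetric])
  then have "\<eta> / 2 \<le> \<bar>z\<bar>" using M by linarith
  then have "(\<eta> / 2)^2 \<le> z^2" using eta by (simp add: abs_le_square_iff[symmetric])
  then show ?thesis by (simp add: power_divide)
qed

text \<open>Type-II error at level \<open>\<eta>\<^sup>2/4\<close>: Chebyshev's inequality for the Gaussian \<open>x\<^sup>T e\<close>.
  This holds for every symmetric weighted graph.\<close>

lemma type2_error_bound:
  fixes W :: "'v \<Rightarrow> 'v \<Rightarrow> real"
  assumes fin: "finite V" and sym: "\<And>u v. u \<in> V \<Longrightarrow> v \<in> V \<Longrightarrow> W u v = W v u"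
    and s: "\<sigma> > 0" and eta: "\<eta> > 0" and beta: "\<beta> \<in> Theta1 V W \<rho> \<eta>"
  shows "prob_obs V \<sigma> \<beta> (\<lambda>y. \<not> spectral_scan V W \<rho> y > \<eta>^2 / 4) \<le> 4 * \<sigma>^2 / \<eta>^2"
proof -
  obtain x where x2: "(\<Sum>v\<in>V. (x v)^2) = 1"
    and scan: "\<And>e. (vnorm V (\<lambda>v. \<beta> v - mean V \<beta>) + (\<Sum>v\<in>V. x v * e v))^2 \<le>
                    spectral_scan V W \<rho> (\<lambda>v. \<beta> v + e v)"
    and norm: "vnorm V (\<lambda>v. \<beta> v - mean V \<beta>) \<ge> \<eta>"
    using scan_ge_cut_signal[where W = W, OF fin sym beta eta] by blast
  have "prob_obs V \<sigma> \<beta> (\<lambda>y. \<not> spectral_scan V W \<rho> y > \<eta>^2 / 4)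
      \<le> (\<integral>e. (\<Sum>v\<in>V. x v * e v)^2 \<partial>noise V \<sigma>) / (\<eta>^2 / 4)"
  proof (rule prob_obs_Markov[OF s])
    show "integrable (noise V \<sigma>) (\<lambda>e. (\<Sum>v\<in>V. x v * e v)^2)"
      by (rule noise_linear_second_moment(1)[OF s fin])
    show "\<eta>^2 / 4 \<le> (\<Sum>v\<in>V. x v * e v)^2"
      if "\<not> spectral_scan V W \<rho> (\<lambda>v. \<beta> v + e v) > \<eta>^2 / 4" for e
      using shifted_square_bound[OF norm eta order_trans[OF scan[of e]]] that by simp
  qed (use eta in auto)
  also have "\<dots> = 4 * \<sigma>^2 / \<eta>^2"
    using noise_linear_second_moment(2)[OF s fin, of x] x2 by simp
  finally show ?thesis .
qed


section \<open>The detection rate\<close>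

definition detection_rate :: "nat \<Rightarrow> nat \<Rightarrow> nat \<Rightarrow> real \<Rightarrow> real \<Rightarrow> real" where
  "detection_rate p l k \<sigma> \<eta> =
     (real p)\<^sup>2 * (real l + 2) * real (p ^ l) powr ((2 * real k + 1) / real l) / (\<eta> / \<sigma>)"

text \<open>Since \<open>n^(1/l) = p\<close>, the rate is the polynomial expression \<open>p^(2k+3) (l+2) \<sigma> / \<eta>\<close>.\<close>

lemma detection_rate_eq:
  assumes p: "p > 0" and l: "l \<ge> 1"
  shows "detection_rate p l k \<sigma> \<eta> = real p ^ (2 * k + 3) * (real l + 2) * (\<sigma> / \<eta>)"
proof -
  have "real (p ^ l) powr ((2 * real k + 1) / real l) = (real p powr real l) powr ((2 * real k + 1) / real l)"
    using p by (simp add: powr_realpow)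
  also have "\<dots> = real p powr real (2 * k + 1)" using l by (simp add: powr_powr add.commute)
  also have "\<dots> = real p ^ (2 * k + 1)" using p by (intro powr_realpow) simp
  finally show ?thesis unfolding detection_rate_def by (simp add: power_add eval_nat_numeral)
qed

lemma type1_bound_le_rate:
  assumes p: "p \<ge> 2" and l: "l \<ge> 1" and k: "k \<ge> 1" and c: "c > 0" and eta: "\<eta> > 0"
  shows "2 * (c * real p powr (2 * real k - real l - 1)) * (real l)^2 * real p ^ (l + 5) * \<sigma>^2 / (\<eta>^2 / 4)
    \<le> 8 * c * (detection_rate p l k \<sigma> \<eta>)^2"
proof -
  have p0: "real p > 0" using p by simp
  have "real p powr (2 * real k - real l - 1) * real p ^ (l + 5) =
      real p powr (2 * real k - real l - 1) * real p powr real (l + 5)"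
    by (simp only: powr_realpow[OF p0])
  also have "\<dots> = real p powr (2 * real k - real l - 1 + real (l + 5))"
    by (rule powr_add[symmetric])
  also have "2 * real k - real l - 1 + real (l + 5) = real (2 * k + 4)" by simp
  also have "real p powr real (2 * k + 4) = real p ^ (2 * k + 4)" by (rule powr_realpow[OF p0])
  finally have pw: "real p powr (2 * real k - real l - 1) * real p ^ (l + 5) = real p ^ (2 * k + 4)" .
  have sq: "(real p ^ (2 * k + 3))^2 = real p ^ (2 * (2 * k + 3))"
    by (metis power_mult mult.commute)
  have "(real l)^2 * real p ^ (2 * k + 4) \<le> (real l + 2)^2 * (real p ^ (2 * k + 3))^2"
    unfolding sq using p by (intro mult_mono power_mono power_increasing) auto
  then have "(real l)^2 * real p ^ (2 * k + 4) * (\<sigma> / \<eta>)^2 \<le>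
      (real l + 2)^2 * (real p ^ (2 * k + 3))^2 * (\<sigma> / \<eta>)^2"
    by (rule mult_right_mono) simp
  also have "\<dots> = (detection_rate p l k \<sigma> \<eta>)^2"
    using p0 l by (simp add: detection_rate_eq power_mult_distrib power_divide mult_ac)
  finally have rate: "(real l)^2 * real p ^ (2 * k + 4) * (\<sigma> / \<eta>)^2 \<le> (detection_rate p l k \<sigma> \<eta>)^2" .
  have "2 * (c * real p powr (2 * real k - real l - 1)) * (real l)^2 * real p ^ (l + 5) * \<sigma>^2 / (\<eta>^2 / 4)
      = 8 * c * ((real l)^2 * real p ^ (2 * k + 4) * (\<sigma> / \<eta>)^2)"
    using pw eta by (simp add: power_divide field_simps)
  also have "\<dots> \<le> 8 * c * (detection_rate p l k \<sigma> \<eta>)^2"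
    using rate c by simp
  finally show ?thesis .
qed

lemma type2_bound_le_rate:
  assumes p: "p \<ge> 1" and l: "l \<ge> 1"
  shows "4 * \<sigma>^2 / \<eta>^2 \<le> 4 * (detection_rate p l k \<sigma> \<eta>)^2"
proof -
  have p1: "1 \<le> real p ^ (2 * k + 3)" using p by simp
  have "real p ^ (2 * k + 3) \<le> real p ^ (2 * k + 3) * (real l + 2)"
    using p1 by (simp add: mult_le_cancel_left1)
  then have "1 \<le> (real p ^ (2 * k + 3) * (real l + 2))^2"
    using p1 by (intro one_le_power) linarith
  then have "1 * (\<sigma> / \<eta>)^2 \<le> (real p ^ (2 * k + 3) * (real l + 2))^2 * (\<sigma> / \<eta>)^2"
    by (rule mult_right_mono) simp
  then show ?thesis using p l by (simp add: detection_rate_eq power_mult_distrib power_divide)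
qed


lemma multiscale_type1_error:
  assumes p: "p \<ge> 2" and l: "l \<ge> 1" and k: "k \<ge> 1" and c: "c > 0"
    and g: "simple_graph_on p E" and conn: "connected_on p E" and s: "\<sigma> > 0" and eta: "\<eta> > 0"
    and beta: "\<beta> \<in> Theta0 (tuples p l)"
  shows "prob_obs (tuples p l) \<sigma> \<beta> (\<lambda>y. spectral_scan (tuples p l) (multiscale_graph p l E)
      (c * real p powr (2 * real k - real l - 1)) y > \<eta>^2 / 4) \<le> 8 * c * (detection_rate p l k \<sigma> \<eta>)^2"
proof -
  have rho: "0 \<le> c * real p powr (2 * real k - real l - 1)" using c by simp
  have "prob_obs (tuples p l) \<sigma> \<beta> (\<lambda>y. spectral_scan (tuples p l) (multiscale_graph p l E)
      (c * real p powr (2 * real k - real l - 1)) y > \<eta>^2 / 4) \<le>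
      2 * (c * real p powr (2 * real k - real l - 1)) * (real l)^2 * real p ^ (l + 5) * \<sigma>^2 / (\<eta>^2 / 4)"
    by (rule type1_error_bound[OF _ g conn rho s _ beta]) (use p eta in auto)
  also have "\<dots> \<le> 8 * c * (detection_rate p l k \<sigma> \<eta>)^2"
    by (rule type1_bound_le_rate[OF p l k c eta])
  finally show ?thesis .
qed

lemma multiscale_type2_error:
  assumes p: "p \<ge> 1" and l: "l \<ge> 1" and g: "simple_graph_on p E" and s: "\<sigma> > 0" and eta: "\<eta> > 0"
    and beta: "\<beta> \<in> Theta1 (tuples p l) (multiscale_graph p l E) \<rho> \<eta>"
  shows "prob_obs (tuples p l) \<sigma> \<beta> (\<lambda>y. \<not> spectral_scan (tuples p l) (multiscale_graph p l E) \<rho> y > \<eta>^2 / 4)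
    \<le> 4 * (detection_rate p l k \<sigma> \<eta>)^2"
  using type2_error_bound[where W = "multiscale_graph p l E", OF finite_tuples multiscale_graph_sym[OF g] s eta beta]
    type2_bound_le_rate[OF p l, of \<sigma> \<eta> k]
  by (rule order_trans)


text \<open>With the threshold \<open>\<tau> = \<eta>\<^sup>2/4\<close> both error probabilities are bounded, uniformly over the
  hypotheses, by constant multiples of the squared detection rate, which tends to zero.\<close>

theorem corollary4:
  fixes p l k :: "nat \<Rightarrow> nat"
    and E :: "nat \<Rightarrow> nat \<Rightarrow> nat \<Rightarrow> bool"
    and \<sigma> \<eta> :: "nat \<Rightarrow> real"
    and c :: real
  defines "n \<equiv> (\<lambda>m. p m ^ l m)"
    and "V \<equiv> (\<lambda>m. tuples (p m) (l m))"
    and "G \<equiv> (\<lambda>m. multiscale_graph (p m) (l m) (E m))"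
    and "\<rho> \<equiv> (\<lambda>m. c * real (p m) powr (2 * real (k m) - real (l m) - 1))"
  assumes p2: "\<And>m. p m \<ge> 2"
    and l1: "\<And>m. l m \<ge> 1"
    and graph: "\<And>m. simple_graph_on (p m) (E m)"
    and conn: "\<And>m. connected_on (p m) (E m)"
    and k_range: "\<And>m. 1 \<le> k m \<and> k m \<le> l m"
    and c_pos: "c > 0"
    and \<sigma>_pos: "\<And>m. \<sigma> m > 0"
    and \<eta>_pos: "\<And>m. \<eta> m > 0"
    and n_lim: "filterlim n at_top sequentially"
    and snr: "(\<lambda>m. (real (p m))\<^sup>2 * (real (l m) + 2) * real (n m) powr ((2 * real (k m) + 1) / real (l m))
                   / (\<eta> m / \<sigma> m)) \<longlonglongrightarrow> 0"
  shows "\<exists>\<tau> :: nat \<Rightarrow> real.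
     (\<forall>e>0. eventually (\<lambda>m. \<forall>\<beta>\<in>Theta0 (V m).
         prob_obs (V m) (\<sigma> m) \<beta> (\<lambda>y. spectral_scan (V m) (G m) (\<rho> m) y > \<tau> m) \<le> e) sequentially) \<and>
     (\<forall>e>0. eventually (\<lambda>m. \<forall>\<beta>\<in>Theta1 (V m) (G m) (\<rho> m) (\<eta> m).
         prob_obs (V m) (\<sigma> m) \<beta> (\<lambda>y. \<not> spectral_scan (V m) (G m) (\<rho> m) y > \<tau> m) \<le> e) sequentially)"
proof -
  define r where "r m = detection_rate (p m) (l m) (k m) (\<sigma> m) (\<eta> m)" for m
  have r2: "(\<lambda>m. (r m)^2) \<longlonglongrightarrow> 0"
    using tendsto_power[OF snr, of 2] unfolding r_def detection_rate_def n_def by simp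
  have lim1: "(\<lambda>m. 8 * c * (r m)^2) \<longlonglongrightarrow> 0" by (rule tendsto_mult_right_zero[OF r2])
  have lim2: "(\<lambda>m. 4 * (r m)^2) \<longlonglongrightarrow> 0" by (rule tendsto_mult_right_zero[OF r2])
  have type1: "prob_obs (V m) (\<sigma> m) \<beta> (\<lambda>y. spectral_scan (V m) (G m) (\<rho> m) y > (\<eta> m)^2 / 4)
      \<le> 8 * c * (r m)^2" if "\<beta> \<in> Theta0 (V m)" for m \<beta>
    unfolding V_def G_def \<rho>_def r_def
    by (rule multiscale_type1_error[OF p2 l1 conjunct1[OF k_range] c_pos graph conn \<sigma>_pos \<eta>_pos
          that[unfolded V_def]])
  have type2: "prob_obs (V m) (\<sigma> m) \<beta> (\<lambda>y. \<not> spectral_scan (V m) (G m) (\<rho> m) y > (\<eta> m)^2 / 4)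
      \<le> 4 * (r m)^2" if "\<beta> \<in> Theta1 (V m) (G m) (\<rho> m) (\<eta> m)" for m \<beta>
    unfolding V_def G_def r_def
    by (rule multiscale_type2_error[OF _ l1 graph \<sigma>_pos \<eta>_pos that[unfolded V_def G_def]])
       (use p2[of m] in simp)
  show ?thesis
  proof (intro exI[of _ "\<lambda>m. (\<eta> m)^2 / 4"] conjI allI impI)
    fix e :: real assume "e > 0"
    show "eventually (\<lambda>m. \<forall>\<beta>\<in>Theta0 (V m).
        prob_obs (V m) (\<sigma> m) \<beta> (\<lambda>y. spectral_scan (V m) (G m) (\<rho> m) y > (\<eta> m)^2 / 4) \<le> e) sequentially"
      using order_tendstoD(2)[OF lim1 \<open>e > 0\<close>]
      by eventually_elim (blast intro: order_trans[OF type1] less_imp_le)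
    show "eventually (\<lambda>m. \<forall>\<beta>\<in>Theta1 (V m) (G m) (\<rho> m) (\<eta> m).
        prob_obs (V m) (\<sigma> m) \<beta> (\<lambda>y. \<not> spectral_scan (V m) (G m) (\<rho> m) y > (\<eta> m)^2 / 4) \<le> e) sequentially"
      using order_tendstoD(2)[OF lim2 \<open>e > 0\<close>]
      by eventually_elim (blast intro: order_trans[OF type2] less_imp_le)
  qed
qed

end
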